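(* Let $T,C_1>0$ and let $\mu\in C([0,T],(0,\infty))$ satisfy $\Phi_h(\mu)\neq 0$. Then the Gâteaux derivatives below exist, and the following two statements are equivalent: (a) $\mathcal{G}(\mu)=C_1$ and there exists $\lambda\in\mathbb{R}$ such that for every $\delta\mu\in C([0,T],\mathbb{R})$, $\frac{\mathrm{d}}{\mathrm{d}\varepsilon}\Big|_{\varepsilon=0}\Big[\Phi(z_{\mu+\varepsilon\delta\mu}(T))+\lambda\,\mathcal{G}(\mu+\varepsilon\delta\mu)\Big]=0$ (the first-order necessary conditions for a stationary point of $\mu\mapsto\Phi(z_\mu(T))$ subject to $\mathcal{G}(\mu)=C_1$); (b) $\mathcal{G}(\mu)=C_1$ and there exists $\lambda_{\mathrm{ref}}\in\mathbb{R}$ such that for every $\delta\mu\in C([0,T],\mathbb{R})$, $\frac{\mathrm{d}}{\mathrm{d}\varepsilon}\Big|_{\varepsilon=0}\Big[\mathcal{I}(\mu+\varepsilon\delta\mu)+\lambda_{\mathrm{ref}}\,\mathcal{G}(\mu+\varepsilon\delta\mu)\Big]=0$ (the first-order necessary conditions for a stationary point of $\mathcal{I}$ subject to $\mathcal{G}(\mu)=C_1$). Moreover, the multipliers correspond via $\lambda_{\mathrm{ref}}=\lambda/\Phi_h(\mu)$.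
   Context: Standing setup: $n,s\ge1$, $p\in\mathbb{R}^s$, $z_0\in\mathbb{R}^n$; $h:\mathbb{R}^n\times\mathbb{R}^s\to\mathbb{R}^n$ is continuously differentiable in its first argument and such that the autonomous initial value problem $\hat z'(\tau)=h(\hat z(\tau),p)$, $\hat z(0)=z_0$ has a unique solution $\hat z$ defined for all $\tau\in\mathbb{R}$. For $T>0$ and $\mu\in C([0,T],\mathbb{R})$, $z_\mu:[0,T]\to\mathbb{R}^n$ denotes the solution of $\dot z(t)=\mu(t)h(z(t),p)$, $z(0)=z_0$. $\Phi:\mathbb{R}^n\to\mathbb{R}$ is continuously differentiable, and $g:\mathbb{R}\to\mathbb{R}$ is continuously differentiable and positive. Define $\mathcal{G}(\mu):=\int_0^T g(\mu(t))\,\mathrm{d}t$, $\mathcal{I}(\mu):=\int_0^T\mu(t)\,\mathrm{d}t$, and $\Phi_h(\mu):=\nabla\Phi(z_\mu(T))\cdot h(z_\mu(T),p)$ (the Lie derivative of $\Phi$ along $h$ at the terminal state). *)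

theory Defs
  imports "HOL-Analysis.Analysis"
begin

definition C1_map :: "('a::euclidean_space \<Rightarrow> 'b::euclidean_space) \<Rightarrow> bool" where
  "C1_map f \<longleftrightarrow> (\<exists>D :: 'a \<Rightarrow> ('a \<Rightarrow>\<^sub>L 'b).
      (\<forall>x. (f has_derivative blinfun_apply (D x)) (at x)) \<and> continuous_on UNIV D)"

definition solves_ivp ::
  "(real^'n \<Rightarrow> real^'s \<Rightarrow> real^'n) \<Rightarrow> real^'s \<Rightarrow> real^'n \<Rightarrow> real \<Rightarrow> (real \<Rightarrow> real)
    \<Rightarrow> (real \<Rightarrow> real^'n) \<Rightarrow> bool" where
  "solves_ivp h p z0 T mu z \<longleftrightarrow> z 0 = z0 \<and>
     (\<forall>t\<in>{0..T}. (z has_vector_derivative (mu t *\<^sub>R h (z t) p)) (at t within {0..T}))"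

definition zT ::
  "(real^'n \<Rightarrow> real^'s \<Rightarrow> real^'n) \<Rightarrow> real^'s \<Rightarrow> real^'n \<Rightarrow> real \<Rightarrow> (real \<Rightarrow> real) \<Rightarrow> real^'n" where
  "zT h p z0 T mu = (THE v. \<exists>z. solves_ivp h p z0 T mu z \<and> z T = v)"

definition Gfun :: "(real \<Rightarrow> real) \<Rightarrow> real \<Rightarrow> (real \<Rightarrow> real) \<Rightarrow> real" where
  "Gfun g T mu = integral {0..T} (\<lambda>t. g (mu t))"

definition Ifun :: "real \<Rightarrow> (real \<Rightarrow> real) \<Rightarrow> real" where
  "Ifun T mu = integral {0..T} mu"

text \<open>Lie derivative nabla Phi(z_mu(T)) . h(z_mu(T),p); the directional
  (Frechet) derivative of Phi at x in direction v equals nabla Phi(x) . v.\<close>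
definition Phi_h ::
  "(real^'n \<Rightarrow> real) \<Rightarrow> (real^'n \<Rightarrow> real^'s \<Rightarrow> real^'n) \<Rightarrow> real^'s \<Rightarrow> real^'n \<Rightarrow> real
     \<Rightarrow> (real \<Rightarrow> real) \<Rightarrow> real" where
  "Phi_h Phi h p z0 T mu =
     frechet_derivative Phi (at (zT h p z0 T mu)) (h (zT h p z0 T mu) p)"

end

theory Submission imports Defs begin

text \<open>The equation \<open>z' = mu(t) h(z,p)\<close> differs from the autonomous one only by the factor
  \<open>mu(t)\<close>, so the time change \<open>\<tau>(t) = \<integral>\<^sub>0\<^sup>t mu\<close> gives \<open>z\<^sub>m\<^sub>u(T) = zhat(\<integral>\<^sub>0\<^sup>T mu)\<close>. Hence
  \<open>Phi(z\<^sub>m\<^sub>u(T))\<close> depends on \<open>mu\<close> only through \<open>Ifun T mu\<close>, and its Gateaux derivative in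
  direction \<open>dmu\<close> is \<open>Phi_h(mu) \<cdot> Ifun T dmu\<close>. Dividing the Lagrange condition by
  \<open>Phi_h(mu) \<noteq> 0\<close> turns one stationarity system into the other.\<close>

lemma C1_map_lipschitz_on_cball:
  fixes H :: "'a::euclidean_space \<Rightarrow> 'b::euclidean_space"
  assumes "C1_map H"
  shows "\<exists>L\<ge>0. \<forall>x\<in>cball 0 R. \<forall>y\<in>cball 0 R. norm (H x - H y) \<le> L * norm (x - y)"
proof -
  obtain D where dD: "\<And>x. (H has_derivative blinfun_apply (D x)) (at x)" and cD: "continuous_on UNIV D"
    using assms unfolding C1_map_def by blast
  have "compact (D ` cball 0 R)"
    by (rule compact_continuous_image) (auto intro: continuous_on_subset[OF cD])
  then obtain B where B: "\<And>x. x \<in> cball 0 R \<Longrightarrow> norm (D x) \<le> B"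
    by (meson compact_imp_bounded bounded_iff image_eqI)
  have "norm (H x - H y) \<le> max B 0 * norm (x - y)" if "x \<in> cball 0 R" "y \<in> cball 0 R" for x y
  proof (rule differentiable_bound[where S="cball 0 R" and f'="\<lambda>x. blinfun_apply (D x)"])
    show "(H has_derivative blinfun_apply (D x)) (at x within cball 0 R)" for x
      using dD has_derivative_at_withinI by blast
    show "onorm (blinfun_apply (D x)) \<le> max B 0" if "x \<in> cball 0 R" for x
      using B[OF that] by (simp add: norm_blinfun.rep_eq)
  qed (use that in auto)
  then show ?thesis by (intro exI[of _ "max B 0"]) auto
qed

text \<open>Gronwall's argument: \<open>exp(-2Ks) \<parallel>e s\<parallel>\<^sup>2\<close> is non-increasing and starts at 0.\<close>
lemma vanishes_if_derivative_linearly_bounded: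
  fixes e e' :: "real \<Rightarrow> 'a::real_inner"
  assumes cont: "continuous_on {0..t} e" and e0: "e 0 = 0" and t: "0 \<le> t"
    and deriv: "\<And>x. x \<in> {0<..<t} \<Longrightarrow> (e has_vector_derivative e' x) (at x)"
    and bound: "\<And>x. x \<in> {0<..<t} \<Longrightarrow> norm (e' x) \<le> K * norm (e x)"
  shows "e t = 0"
proof -
  define f where "f s = exp (- 2 * K * s) * (e s \<bullet> e s)" for s
  have "f t \<le> f 0"
  proof (rule DERIV_nonpos_imp_decreasing_open[OF t])
    show "continuous_on {0..t} f"
      unfolding f_def by (intro continuous_on_mult continuous_on_inner cont continuous_intros)
    fix x assume x: "0 < x" "x < t"
    then have "(e has_derivative (\<lambda>u. u *\<^sub>R e' x)) (at x)"
      using deriv by (simp add: has_vector_derivative_def)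
    from has_derivative_inner[OF this this]
    have sq: "((\<lambda>s. e s \<bullet> e s) has_real_derivative 2 * (e x \<bullet> e' x)) (at x)"
      unfolding has_field_derivative_def
      by (rule has_derivative_eq_rhs) (auto simp: inner_commute algebra_simps)
    have df: "(f has_real_derivative
                exp (- 2 * K * x) * (2 * (e x \<bullet> e' x) - 2 * K * (e x \<bullet> e x))) (at x)"
      unfolding f_def by (rule derivative_eq_intros sq refl | simp)+ (simp add: algebra_simps)
    have "e x \<bullet> e' x \<le> norm (e x) * norm (e' x)" by (rule norm_cauchy_schwarz)
    also have "\<dots> \<le> norm (e x) * (K * norm (e x))"
      using bound x by (intro mult_left_mono) auto
    finally have "2 * (e x \<bullet> e' x) - 2 * K * (e x \<bullet> e x) \<le> 0"
      by (simp add: power2_norm_eq_inner[symmetric] power2_eq_square algebra_simps)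
    then show "\<exists>y. DERIV f x :> y \<and> y \<le> 0"
      using df by (auto simp: mult_nonneg_nonpos)
  qed
  moreover have "f 0 = 0" and "f t \<ge> 0"
    unfolding f_def e0 by simp_all
  ultimately have "f t = 0" by linarith
  then show ?thesis unfolding f_def by simp
qed

lemma bounded_on_Icc_if_continuous:
  fixes f :: "real \<Rightarrow> 'a::real_normed_vector"
  assumes "continuous_on {a..b} f"
  obtains B where "\<And>s. s \<in> {a..b} \<Longrightarrow> norm (f s) \<le> B"
  using compact_imp_bounded[OF compact_continuous_image[OF assms compact_Icc]]
  by (meson bounded_iff image_eqI that)

lemma ivp_unique:
  fixes H :: "'a::euclidean_space \<Rightarrow> 'a" and nu :: "real \<Rightarrow> real"
  assumes H: "C1_map H" and nu: "continuous_on {0..T} nu"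
    and z1: "\<And>t. t \<in> {0..T} \<Longrightarrow> (z1 has_vector_derivative (nu t *\<^sub>R H (z1 t))) (at t within {0..T})"
    and z2: "\<And>t. t \<in> {0..T} \<Longrightarrow> (z2 has_vector_derivative (nu t *\<^sub>R H (z2 t))) (at t within {0..T})"
    and init: "z1 0 = z2 0" and t: "t \<in> {0..T}"
  shows "z1 t = z2 t"
proof -
  have c1: "continuous_on {0..T} z1" and c2: "continuous_on {0..T} z2"
    using z1 z2 has_vector_derivative_continuous continuous_on_eq_continuous_within by blast+
  obtain R1 where R1: "\<And>s. s \<in> {0..T} \<Longrightarrow> norm (z1 s) \<le> R1"
    using bounded_on_Icc_if_continuous[OF c1] by blast
  obtain R2 where R2: "\<And>s. s \<in> {0..T} \<Longrightarrow> norm (z2 s) \<le> R2"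
    using bounded_on_Icc_if_continuous[OF c2] by blast
  obtain M where M: "\<And>s. s \<in> {0..T} \<Longrightarrow> norm (nu s) \<le> M"
    using bounded_on_Icc_if_continuous[OF nu] by blast
  obtain L where L: "L \<ge> 0" and
    lip: "\<And>x y. x \<in> cball 0 (max R1 R2) \<Longrightarrow> y \<in> cball 0 (max R1 R2) \<Longrightarrow>
                 norm (H x - H y) \<le> L * norm (x - y)"
    using C1_map_lipschitz_on_cball[OF H] by blast
  have "(\<lambda>s. z1 s - z2 s) t = 0"
  proof (rule vanishes_if_derivative_linearly_bounded
      [where e'="\<lambda>s. nu s *\<^sub>R (H (z1 s) - H (z2 s))" and K="M * L"])
    show "continuous_on {0..t} (\<lambda>s. z1 s - z2 s)"
      using continuous_on_subset[OF continuous_on_diff[OF c1 c2]] t by auto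
    fix x assume x: "x \<in> {0<..<t}"
    then have xT: "x \<in> {0..T}" and at: "at x within {0..T} = at x"
      using t by (auto intro: at_within_Icc_at)
    show "((\<lambda>s. z1 s - z2 s) has_vector_derivative nu x *\<^sub>R (H (z1 x) - H (z2 x))) (at x)"
      unfolding scaleR_diff_right using z1[OF xT] z2[OF xT] unfolding at
      by (intro derivative_intros)
    have "z1 x \<in> cball 0 (max R1 R2)" "z2 x \<in> cball 0 (max R1 R2)"
      using R1[OF xT] R2[OF xT] by auto
    then have "\<bar>nu x\<bar> * norm (H (z1 x) - H (z2 x)) \<le> M * (L * norm (z1 x - z2 x))"
      using M[OF xT] L by (intro mult_mono lip) auto
    then show "norm (nu x *\<^sub>R (H (z1 x) - H (z2 x))) \<le> M * L * norm (z1 x - z2 x)"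
      by (simp add: mult.assoc)
  qed (use init t in auto)
  then show ?thesis by simp
qed

lemma zT_time_change:
  fixes h :: "real^'n \<Rightarrow> real^'s \<Rightarrow> real^'n" and zh :: "real \<Rightarrow> real^'n"
  assumes H: "C1_map (\<lambda>x. h x p)"
    and zh0: "zh 0 = z0" and zh': "\<And>\<tau>. (zh has_vector_derivative h (zh \<tau>) p) (at \<tau>)"
    and nu: "continuous_on {0..T} nu" and T: "0 \<le> T"
  shows "zT h p z0 T nu = zh (integral {0..T} nu)"
proof -
  define y where "y t = zh (integral {0..t} nu)" for t
  have y: "solves_ivp h p z0 T nu y"
    unfolding solves_ivp_def
  proof (intro conjI ballI)
    show "y 0 = z0" unfolding y_def using zh0 by simp
    fix t assume "t \<in> {0..T}"
    from vector_diff_chain_within[OF integral_has_vector_derivative[OF nu this]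
        has_vector_derivative_at_within[OF zh']]
    show "(y has_vector_derivative nu t *\<^sub>R h (y t) p) (at t within {0..T})"
      unfolding y_def o_def .
  qed
  show ?thesis
    unfolding zT_def
  proof (rule the_equality)
    show "\<exists>z. solves_ivp h p z0 T nu z \<and> z T = zh (integral {0..T} nu)"
      using y by (auto simp: y_def)
    fix v assume "\<exists>z. solves_ivp h p z0 T nu z \<and> z T = v"
    then obtain z where "solves_ivp h p z0 T nu z" and "z T = v" by blast
    moreover have "z T = y T" if "solves_ivp h p z0 T nu z"
      by (rule ivp_unique[OF H nu, of z y]) (use that y T in \<open>auto simp: solves_ivp_def\<close>)
    ultimately show "v = zh (integral {0..T} nu)" by (simp add: y_def)
  qed
qed

lemma integral_perturbation:
  fixes mu dmu :: "real \<Rightarrow> real"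
  assumes "continuous_on {0..T} mu" "continuous_on {0..T} dmu"
  shows "integral {0..T} (\<lambda>t. mu t + \<epsilon> * dmu t) = integral {0..T} mu + \<epsilon> * integral {0..T} dmu"
proof -
  have "(\<lambda>t. \<epsilon> * dmu t) integrable_on {0..T}" "mu integrable_on {0..T}"
    using assms by (auto intro!: integrable_continuous_real continuous_intros)
  then show ?thesis by (simp add: integral_add)
qed

lemma Ifun_perturbation_has_derivative:
  fixes mu dmu :: "real \<Rightarrow> real"
  assumes "continuous_on {0..T} mu" "continuous_on {0..T} dmu"
  shows "((\<lambda>\<epsilon>. Ifun T (\<lambda>t. mu t + \<epsilon> * dmu t)) has_real_derivative integral {0..T} dmu) (at 0)"
  unfolding Ifun_def integral_perturbation[OF assms] by (auto intro!: derivative_eq_intros)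

lemma Gfun_perturbation_has_derivative:
  fixes g mu dmu :: "real \<Rightarrow> real"
  assumes g: "g C1_differentiable_on UNIV"
    and mu: "continuous_on {0..T} mu" and dmu: "continuous_on {0..T} dmu"
  shows "((\<lambda>\<epsilon>. Gfun g T (\<lambda>t. mu t + \<epsilon> * dmu t)) has_real_derivative
           integral {0..T} (\<lambda>t. deriv g (mu t) * dmu t)) (at 0)"
proof -
  obtain D where dD: "\<And>x. (g has_vector_derivative D x) (at x)" and cD: "continuous_on UNIV D"
    using g unfolding C1_differentiable_on_def by blast
  have g': "(g has_real_derivative D x) (at x)" for x
    using dD[of x] by (simp add: has_real_derivative_iff_has_vector_derivative)
  have "((\<lambda>\<epsilon>. integral (cbox 0 T) (\<lambda>t. g (mu t + \<epsilon> * dmu t))) has_real_derivative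
          integral (cbox 0 T) (\<lambda>t. D (mu t + 0 * dmu t) * dmu t)) (at 0 within UNIV)"
  proof (rule leibniz_rule_field_derivative[where fx="\<lambda>\<epsilon> t. D (mu t + \<epsilon> * dmu t) * dmu t"])
    show "((\<lambda>\<epsilon>. g (mu t + \<epsilon> * dmu t)) has_real_derivative D (mu t + x * dmu t) * dmu t)
            (at x within UNIV)" for x t
      by (rule DERIV_chain2[OF g']) (auto intro!: derivative_eq_intros)
    have "continuous_on UNIV g"
      using g' by (metis DERIV_isCont continuous_at_imp_continuous_on)
    then show "(\<lambda>t. g (mu t + x * dmu t)) integrable_on cbox 0 T" for x
      by (auto intro!: integrable_continuous_real continuous_on_compose2[of UNIV g] continuous_intros mu dmu)
    have "continuous_on (UNIV \<times> {0..T}) (\<lambda>z. mu (snd z))" "continuous_on (UNIV \<times> {0..T}) (\<lambda>z. dmu (snd z))"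
      by (auto intro: continuous_on_compose2[OF mu continuous_on_snd] continuous_on_compose2[OF dmu continuous_on_snd])
    then have "continuous_on (UNIV \<times> {0..T}) (\<lambda>z. D (mu (snd z) + fst z * dmu (snd z)) * dmu (snd z))"
      by (intro continuous_on_mult continuous_on_compose2[OF cD] continuous_on_add
          continuous_on_fst continuous_on_id) auto
    then show "continuous_on (UNIV \<times> cbox 0 T) (\<lambda>(\<epsilon>, t). D (mu t + \<epsilon> * dmu t) * dmu t)"
      by (simp add: split_beta)
  qed auto
  moreover have "deriv g = D" using g' by (simp add: DERIV_imp_deriv fun_eq_iff)
  ultimately show ?thesis unfolding Gfun_def by (simp add: cbox_interval)
qed

lemma Phi_zT_perturbation_has_derivative:
  fixes h :: "real^'n \<Rightarrow> real^'s \<Rightarrow> real^'n" and zh :: "real \<Rightarrow> real^'n" and Phi :: "real^'n \<Rightarrow> real"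
  assumes H: "C1_map (\<lambda>x. h x p)" and Phi: "C1_map Phi"
    and zh0: "zh 0 = z0" and zh': "\<And>\<tau>. (zh has_vector_derivative h (zh \<tau>) p) (at \<tau>)"
    and T: "0 \<le> T" and mu: "continuous_on {0..T} mu" and dmu: "continuous_on {0..T} dmu"
  shows "((\<lambda>\<epsilon>. Phi (zT h p z0 T (\<lambda>t. mu t + \<epsilon> * dmu t))) has_real_derivative
           Phi_h Phi h p z0 T mu * integral {0..T} dmu) (at 0)"
proof -
  define a b where "a = integral {0..T} mu" and "b = integral {0..T} dmu"
  obtain DP where DP: "\<And>x. (Phi has_derivative blinfun_apply (DP x)) (at x)"
    using Phi unfolding C1_map_def by blast
  have zT: "zT h p z0 T (\<lambda>t. mu t + \<epsilon> * dmu t) = zh (a + \<epsilon> * b)" for \<epsilon>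
    using zT_time_change[where h=h and p=p, OF H zh0 zh' _ T] integral_perturbation[OF mu dmu]
    by (simp add: a_def b_def continuous_intros mu dmu)
  have Phi_h: "Phi_h Phi h p z0 T mu = DP (zh a) (h (zh a) p)"
    using zT[of 0] frechet_derivative_at[OF DP] by (simp add: Phi_h_def)
  have "((\<lambda>\<epsilon>. a + \<epsilon> * b) has_vector_derivative b) (at 0)"
    unfolding has_real_derivative_iff_has_vector_derivative[symmetric]
    by (auto intro!: derivative_eq_intros)
  from vector_diff_chain_at[OF this] zh'[of a]
  have "((\<lambda>\<epsilon>. zh (a + \<epsilon> * b)) has_derivative (\<lambda>\<epsilon>. \<epsilon> *\<^sub>R b *\<^sub>R h (zh a) p)) (at 0)"
    by (simp add: has_vector_derivative_def o_def)
  from diff_chain_at[OF this DP[of "zh (a + 0 * b)"]]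
  have "((\<lambda>\<epsilon>. Phi (zh (a + \<epsilon> * b))) has_derivative (\<lambda>\<epsilon>. \<epsilon> * b * DP (zh a) (h (zh a) p))) (at 0)"
    by (simp add: o_def blinfun.scaleR_right)
  then show ?thesis
    unfolding zT Phi_h has_field_derivative_def b_def[symmetric]
    by (rule has_derivative_eq_rhs) (simp add: fun_eq_iff)
qed

lemma stationary_Lagrangian_rescale:
  fixes F I G :: "real \<Rightarrow> real"
  assumes F: "(F has_real_derivative P * b) (at x)" and I: "(I has_real_derivative b) (at x)"
    and G: "(G has_real_derivative \<gamma>) (at x)" and P: "P \<noteq> 0"
  shows "((\<lambda>\<epsilon>. F \<epsilon> + lam * G \<epsilon>) has_real_derivative 0) (at x) \<longleftrightarrow>
         ((\<lambda>\<epsilon>. I \<epsilon> + lam / P * G \<epsilon>) has_real_derivative 0) (at x)"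
proof -
  have L: "((\<lambda>\<epsilon>. F \<epsilon> + lam * G \<epsilon>) has_real_derivative P * b + lam * \<gamma>) (at x)"
    using F G by (intro DERIV_add DERIV_cmult)
  have L_ref: "((\<lambda>\<epsilon>. I \<epsilon> + lam / P * G \<epsilon>) has_real_derivative b + lam / P * \<gamma>) (at x)"
    using I G by (intro DERIV_add DERIV_cmult)
  have "b + lam / P * \<gamma> = (P * b + lam * \<gamma>) / P"
    using P by (simp add: field_simps)
  with P have "P * b + lam * \<gamma> = 0 \<longleftrightarrow> b + lam / P * \<gamma> = 0"
    by simp
  with L L_ref show ?thesis
    by (metis DERIV_unique)
qed

lemma ex_iff_ex_rescaled:
  fixes c :: real
  assumes "c \<noteq> 0" and "\<And>x. A x \<longleftrightarrow> B (x / c)"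
  shows "(\<exists>x. A x) \<longleftrightarrow> (\<exists>y. B y)"
  using assms by (metis nonzero_mult_div_cancel_right)

theorem theorem1:
  fixes h :: "real^'n \<Rightarrow> real^'s \<Rightarrow> real^'n" and p :: "real^'s" and z0 :: "real^'n"
    and Phi :: "real^'n \<Rightarrow> real" and g :: "real \<Rightarrow> real"
    and T C\<^sub>1 :: real and mu :: "real \<Rightarrow> real"
  assumes h_C1: "\<And>q. C1_map (\<lambda>x. h x q)"
    and zhat: "\<exists>!zh :: real \<Rightarrow> real^'n. zh 0 = z0 \<and>
                 (\<forall>\<tau>. (zh has_vector_derivative h (zh \<tau>) p) (at \<tau>))"
    and Phi_C1: "C1_map Phi"
    and g_C1: "g C1_differentiable_on UNIV" and g_pos: "\<And>x. g x > 0"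
    and T_pos: "T > 0" and C1_pos: "C\<^sub>1 > 0"
    and mu_cont: "continuous_on {0..T} mu" and mu_pos: "\<And>t. t \<in> {0..T} \<Longrightarrow> mu t > 0"
    and Phih_nz: "Phi_h Phi h p z0 T mu \<noteq> 0"
  shows "(\<forall>dmu. continuous_on {0..T} dmu \<longrightarrow>
            (\<lambda>\<epsilon>. Phi (zT h p z0 T (\<lambda>t. mu t + \<epsilon> * dmu t))) differentiable (at 0) \<and>
            (\<lambda>\<epsilon>. Gfun g T (\<lambda>t. mu t + \<epsilon> * dmu t)) differentiable (at 0) \<and>
            (\<lambda>\<epsilon>. Ifun T (\<lambda>t. mu t + \<epsilon> * dmu t)) differentiable (at 0))
     \<and> ((Gfun g T mu = C\<^sub>1 \<and> (\<exists>lam. \<forall>dmu. continuous_on {0..T} dmu \<longrightarrow>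
            ((\<lambda>\<epsilon>. Phi (zT h p z0 T (\<lambda>t. mu t + \<epsilon> * dmu t))
                    + lam * Gfun g T (\<lambda>t. mu t + \<epsilon> * dmu t)) has_real_derivative 0) (at 0)))
        \<longleftrightarrow>
        (Gfun g T mu = C\<^sub>1 \<and> (\<exists>lam_ref. \<forall>dmu. continuous_on {0..T} dmu \<longrightarrow>
            ((\<lambda>\<epsilon>. Ifun T (\<lambda>t. mu t + \<epsilon> * dmu t)
                    + lam_ref * Gfun g T (\<lambda>t. mu t + \<epsilon> * dmu t)) has_real_derivative 0) (at 0))))
     \<and> (\<forall>lam. (Gfun g T mu = C\<^sub>1 \<and> (\<forall>dmu. continuous_on {0..T} dmu \<longrightarrow>
            ((\<lambda>\<epsilon>. Phi (zT h p z0 T (\<lambda>t. mu t + \<epsilon> * dmu t))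
                    + lam * Gfun g T (\<lambda>t. mu t + \<epsilon> * dmu t)) has_real_derivative 0) (at 0)))
        \<longleftrightarrow>
        (Gfun g T mu = C\<^sub>1 \<and> (\<forall>dmu. continuous_on {0..T} dmu \<longrightarrow>
            ((\<lambda>\<epsilon>. Ifun T (\<lambda>t. mu t + \<epsilon> * dmu t)
                    + (lam / Phi_h Phi h p z0 T mu) * Gfun g T (\<lambda>t. mu t + \<epsilon> * dmu t))
               has_real_derivative 0) (at 0))))"
proof -
  obtain zh :: "real \<Rightarrow> real^'n"
    where zh0: "zh 0 = z0" and zh': "\<And>\<tau>. (zh has_vector_derivative h (zh \<tau>) p) (at \<tau>)"
    using zhat by blast
  let ?F = "\<lambda>dmu \<epsilon>. Phi (zT h p z0 T (\<lambda>t. mu t + \<epsilon> * dmu t))"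
  let ?G = "\<lambda>dmu \<epsilon>. Gfun g T (\<lambda>t. mu t + \<epsilon> * dmu t)"
  let ?I = "\<lambda>dmu \<epsilon>. Ifun T (\<lambda>t. mu t + \<epsilon> * dmu t)"
  note F = Phi_zT_perturbation_has_derivative[where h=h and p=p, OF h_C1 Phi_C1 zh0 zh'
      less_imp_le[OF T_pos] mu_cont]
  note G = Gfun_perturbation_has_derivative[OF g_C1 mu_cont]
  note I = Ifun_perturbation_has_derivative[OF mu_cont]
  have "?F dmu differentiable (at 0) \<and> ?G dmu differentiable (at 0) \<and> ?I dmu differentiable (at 0)"
    if "continuous_on {0..T} dmu" for dmu
    using F[OF that] G[OF that] I[OF that] real_differentiable_def by blast
  moreover have stationary_iff:
    "(\<forall>dmu. continuous_on {0..T} dmu \<longrightarrow>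
        ((\<lambda>\<epsilon>. ?F dmu \<epsilon> + lam * ?G dmu \<epsilon>) has_real_derivative 0) (at 0)) \<longleftrightarrow>
     (\<forall>dmu. continuous_on {0..T} dmu \<longrightarrow>
        ((\<lambda>\<epsilon>. ?I dmu \<epsilon> + lam / Phi_h Phi h p z0 T mu * ?G dmu \<epsilon>) has_real_derivative 0) (at 0))"
    for lam
    using stationary_Lagrangian_rescale[OF F I G Phih_nz] by blast
  ultimately show ?thesis
    using ex_iff_ex_rescaled[where B="\<lambda>lam_ref. \<forall>dmu. continuous_on {0..T} dmu \<longrightarrow>
        ((\<lambda>\<epsilon>. ?I dmu \<epsilon> + lam_ref * ?G dmu \<epsilon>) has_real_derivative 0) (at 0)",
        OF Phih_nz stationary_iff] by blast
qed

end
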